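(* Let $\hat q$ be an $n\times n$ and $\hat p$ an $m\times m$ parametric matrix, let $M$ be an $n\times m$ $(\hat q,\hat p)$-Manin matrix over $\mathfrak R$ and $N$ an $m\times n$ $(\hat p,\hat q)$-Manin matrix over $\mathfrak R$ such that every $N_{ij}$ commutes with every $M_{kl}$. Then $$\mathrm{char}_{\hat q}(MN,t)=t^{n-m}\,\mathrm{char}_{\hat p}(NM,t).$$
   Context: $\mathfrak R$ is an associative unital algebra over $\mathbb C$; $t$ is a central indeterminate. A parametric $n\times n$ matrix is $\hat q=(q_{ij})$ with nonzero complex entries, $q_{ij}q_{ji}=1$, $q_{ii}=1$. For parametric $\hat q$ ($n\times n$) and $\hat p$ ($m\times m$), an $n\times m$ matrix $M$ over $\mathfrak R$ is a $(\hat q,\hat p)$-Manin matrix if $M_{ik}M_{jk}=q_{ji}M_{jk}M_{ik}$ for $i<j$ and all $k$, and $M_{ik}M_{jl}-q_{ji}p_{kl}M_{jl}M_{ik}+p_{kl}M_{il}M_{jk}-q_{ji}M_{jk}M_{il}=0$ for $i<j$, $k<l$. Let $P_{\hat q}=\sum_{i,j}q_{ji}E_{ij}\otimes E_{ji}$; $s_i\mapsto P_{\hat q}^{(i,i+1)}$ defines an action $\sigma\mapsto P_{\hat q}^{\sigma}$ of $S_k$ on $(\mathbb C^n)^{\otimes k}$, and $A_{\hat q}^{(k)}=\frac1{k!}\sum_{\sigma\in S_k}\mathrm{sgn}(\sigma)P_{\hat q}^{\sigma}$. For an $n\times n$ matrix $X$ over $\mathfrak R$, $e_0(X)=1$, $e_k(X)=\mathrm{tr}_{1,\dots,k}A_{\hat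 q}^{(k)}X_1\cdots X_k$ ($X_a$ = $X$ acting on the $a$-th tensor factor, full trace), and $\mathrm{char}_{\hat q}(X,t)=\sum_{k=0}^n(-1)^ke_k(X)t^{n-k}$; $\mathrm{char}_{\hat p}$ of an $m\times m$ matrix is defined likewise with $\hat p$ and $m$. *)

theory Defs
  imports Complex_Main "HOL-Combinatorics.Permutations"
begin

class cplx_algebra_1 = ring_1 +
  fixes scaleC :: "complex \<Rightarrow> 'a \<Rightarrow> 'a"
  assumes scaleC_add_right: "scaleC c (x + y) = scaleC c x + scaleC c y"
    and scaleC_add_left: "scaleC (c + d) x = scaleC c x + scaleC d x"
    and scaleC_scaleC: "scaleC c (scaleC d x) = scaleC (c * d) x"
    and scaleC_one: "scaleC 1 x = x"
    and mult_scaleC_left: "scaleC c x * y = scaleC c (x * y)"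
    and mult_scaleC_right: "x * scaleC c y = scaleC c (x * y)"

text \<open>Matrices are functions on 0-based indices; only indices below the size matter.\<close>

definition is_parametric :: "nat \<Rightarrow> (nat \<Rightarrow> nat \<Rightarrow> complex) \<Rightarrow> bool" where
  "is_parametric n q \<longleftrightarrow> (\<forall>i<n. \<forall>j<n. q i j \<noteq> 0 \<and> q i j * q j i = 1) \<and> (\<forall>i<n. q i i = 1)"

definition manin :: "(nat \<Rightarrow> nat \<Rightarrow> complex) \<Rightarrow> (nat \<Rightarrow> nat \<Rightarrow> complex) \<Rightarrow> nat \<Rightarrow> nat
    \<Rightarrow> (nat \<Rightarrow> nat \<Rightarrow> 'a::cplx_algebra_1) \<Rightarrow> bool" where
  "manin q p n m M \<longleftrightarrow>
     (\<forall>i j k. i < j \<and> j < n \<and> k < m \<longrightarrow> M i k * M j k = scaleC (q j i) (M j k * M i k)) \<and>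
     (\<forall>i j k l. i < j \<and> j < n \<and> k < l \<and> l < m \<longrightarrow>
        M i k * M j l - scaleC (q j i * p k l) (M j l * M i k)
        + scaleC (p k l) (M i l * M j k) - scaleC (q j i) (M j k * M i l) = 0)"

definition matmul :: "nat \<Rightarrow> (nat \<Rightarrow> nat \<Rightarrow> 'a::cplx_algebra_1) \<Rightarrow> (nat \<Rightarrow> nat \<Rightarrow> 'a) \<Rightarrow> nat \<Rightarrow> nat \<Rightarrow> 'a" where
  "matmul m M N i k = (\<Sum>l<m. M i l * N l k)"

text \<open>Basis of \<open>(\<complex>^n)^{\<otimes>k}\<close>: multi-indices of length k with entries below n.\<close>
definition tidx :: "nat \<Rightarrow> nat \<Rightarrow> nat list set" where
  "tidx n k = {I. length I = k \<and> set I \<subseteq> {..<n}}"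

definition swap_idx :: "nat \<Rightarrow> nat list \<Rightarrow> nat list" where
  "swap_idx a I = I[a := I ! Suc a, Suc a := I ! a]"

text \<open>Matrix entries of \<open>P_q^{(a+1,a+2)}\<close> (0-based position a) on the tensor power:
  \<open>P_q = \<Sum> q_ji E_ij \<otimes> E_ji\<close> maps \<open>e_j \<otimes> e_i\<close> to \<open>q_ji e_i \<otimes> e_j\<close>.\<close>
definition Pswap :: "(nat \<Rightarrow> nat \<Rightarrow> complex) \<Rightarrow> nat \<Rightarrow> nat list \<Rightarrow> nat list \<Rightarrow> complex" where
  "Pswap q a I J = (if J = swap_idx a I then q (I ! Suc a) (I ! a) else 0)"

definition tmul :: "nat \<Rightarrow> nat \<Rightarrow> (nat list \<Rightarrow> nat list \<Rightarrow> complex) \<Rightarrow> (nat list \<Rightarrow> nat list \<Rightarrow> complex)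
    \<Rightarrow> nat list \<Rightarrow> nat list \<Rightarrow> complex" where
  "tmul n k A B I J = (\<Sum>L\<in>tidx n k. A I L * B L J)"

definition tid :: "nat list \<Rightarrow> nat list \<Rightarrow> complex" where
  "tid I J = (if I = J then 1 else 0)"

definition perm_of_word :: "nat list \<Rightarrow> nat \<Rightarrow> nat" where
  "perm_of_word w = foldr (\<lambda>a \<sigma>. transpose a (Suc a) \<circ> \<sigma>) w id"

definition Pword :: "(nat \<Rightarrow> nat \<Rightarrow> complex) \<Rightarrow> nat \<Rightarrow> nat \<Rightarrow> nat list \<Rightarrow> nat list \<Rightarrow> nat list \<Rightarrow> complex" where
  "Pword q n k w = foldr (\<lambda>a B. tmul n k (Pswap q a) B) w tid"

text \<open>\<open>P_q^\<sigma>\<close>, computed along any word in the generators \<open>s_a\<close> (a+1<k) representing \<sigma>.\<close>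
definition Pperm :: "(nat \<Rightarrow> nat \<Rightarrow> complex) \<Rightarrow> nat \<Rightarrow> nat \<Rightarrow> (nat \<Rightarrow> nat) \<Rightarrow> nat list \<Rightarrow> nat list \<Rightarrow> complex" where
  "Pperm q n k \<sigma> = Pword q n k (SOME w. (\<forall>a\<in>set w. Suc a < k) \<and> perm_of_word w = \<sigma>)"

definition Aq :: "(nat \<Rightarrow> nat \<Rightarrow> complex) \<Rightarrow> nat \<Rightarrow> nat \<Rightarrow> nat list \<Rightarrow> nat list \<Rightarrow> complex" where
  "Aq q n k I J = (1 / fact k) * (\<Sum>\<sigma>\<in>{\<sigma>. \<sigma> permutes {..<k}}. of_int (sign \<sigma>) * Pperm q n k \<sigma> I J)"

text \<open>\<open>e_k(X) = tr_{1..k} A^{(k)} X_1 \<cdots> X_k\<close>; the entry \<open>(J,I)\<close> of \<open>X_1\<cdots>X_k\<close> is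
  \<open>X_{j_1 i_1} \<cdots> X_{j_k i_k}\<close> (in this order).\<close>
definition ek :: "(nat \<Rightarrow> nat \<Rightarrow> complex) \<Rightarrow> nat \<Rightarrow> nat \<Rightarrow> (nat \<Rightarrow> nat \<Rightarrow> 'a::cplx_algebra_1) \<Rightarrow> 'a" where
  "ek q n k X = (if k = 0 then 1 else
     (\<Sum>I\<in>tidx n k. \<Sum>J\<in>tidx n k. scaleC (Aq q n k I J) (prod_list (map (\<lambda>a. X (J ! a) (I ! a)) [0..<k]))))"

text \<open>Coefficient of \<open>t^j\<close> (j an integer, allowing Laurent shifts) in
  \<open>char_q(X,t) = \<Sum>_{k=0}^n (-1)^k e_k(X) t^{n-k}\<close>.\<close>
definition char_coeff :: "(nat \<Rightarrow> nat \<Rightarrow> complex) \<Rightarrow> nat \<Rightarrow> (nat \<Rightarrow> nat \<Rightarrow> 'a::cplx_algebra_1) \<Rightarrow> int \<Rightarrow> 'a" where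
  "char_coeff q n X j = (if 0 \<le> j \<and> j \<le> int n then (-1) ^ (n - nat j) * ek q n (n - nat j) X else 0)"

end

theory Submission
  imports Defs
begin

(*
  The q-antisymmetrizer satisfies
  A_q P_q^{(a,a+1)} = -A_q, so its rows are q-alternating covectors; these vanish on
  multi-indices with a repeated entry, whence e_k = 0 for k > n, and they are fixed by A_q.
  For a (q,p)-Manin matrix M the relations (1 - P_q) M^{\<otimes>k} (1 + P_p) = 0 make the rows of
  A_q M^{\<otimes>k} p-alternating, so A_q M^{\<otimes>k} = A_q M^{\<otimes>k} A_p. As the entries of M and N
  commute, (MN)^{\<otimes>k} = M^{\<otimes>k} N^{\<otimes>k} and
    e_k(MN) = tr A_q M^{\<otimes>k} A_p N^{\<otimes>k} = tr A_p N^{\<otimes>k} A_q M^{\<otimes>k} = e_k(NM)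
  by cyclicity of the trace. Comparing coefficients gives the factor t^(n-m).
  That P_q^\<sigma> does not depend on the word chosen for \<sigma> follows from a closed form of P_q^w
  in terms of the inversions of the permutation of w.
*)

lemma scaleC_zero_right [simp]: "scaleC c (0::'a::cplx_algebra_1) = 0"
proof -
  have "scaleC c (0::'a) + scaleC c 0 = scaleC c 0 + 0" by (simp flip: scaleC_add_right)
  then show ?thesis by simp
qed

lemma scaleC_zero_left [simp]: "scaleC 0 (x::'a::cplx_algebra_1) = 0"
proof -
  have "scaleC 0 x + scaleC 0 x = scaleC 0 x + 0" by (simp flip: scaleC_add_left)
  then show ?thesis by simp
qed

lemma scaleC_minus_right: "scaleC c (- x) = - scaleC c (x::'a::cplx_algebra_1)"
proof -
  have "scaleC c x + scaleC c (- x) = 0" by (simp flip: scaleC_add_right)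
  then show ?thesis by (simp add: add_eq_0_iff)
qed

lemma scaleC_minus_left: "scaleC (- c) x = - scaleC c (x::'a::cplx_algebra_1)"
proof -
  have "scaleC c x + scaleC (- c) x = 0" by (simp flip: scaleC_add_left)
  then show ?thesis by (simp add: add_eq_0_iff)
qed

lemma scaleC_diff_right: "scaleC c (x - y) = scaleC c x - scaleC c (y::'a::cplx_algebra_1)"
  by (simp only: diff_conv_add_uminus scaleC_add_right scaleC_minus_right)

lemma scaleC_sum_right: "scaleC c (sum f A) = (\<Sum>i\<in>A. scaleC c (f i::'a::cplx_algebra_1))"
  by (induction A rule: infinite_finite_induct) (auto simp: scaleC_add_right)

lemma scaleC_sum_left: "scaleC (sum f A) x = (\<Sum>i\<in>A. scaleC (f i) (x::'a::cplx_algebra_1))"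
  by (induction A rule: infinite_finite_induct) (auto simp: scaleC_add_left)

lemma add_self_eq_0_imp_eq_0:
  fixes x :: "'a::cplx_algebra_1"
  assumes "x + x = 0"
  shows "x = 0"
proof -
  have "x = scaleC (1/2 + 1/2) x" by (simp add: scaleC_one)
  also have "\<dots> = scaleC (1/2) (x + x)" by (simp only: scaleC_add_left scaleC_add_right)
  finally show ?thesis using assms by simp
qed

instantiation complex :: cplx_algebra_1
begin

definition scaleC_complex :: "complex \<Rightarrow> complex \<Rightarrow> complex" where
  "scaleC_complex c z = c * z"

instance by standard (simp_all add: scaleC_complex_def algebra_simps)

end

lemma scaleC_complex_eq_mult [simp]: "scaleC c z = c * (z::complex)"
  by (simp add: scaleC_complex_def)

section \<open>Multi-indices and words\<close>

lemma finite_tidx [simp]: "finite (tidx n k)"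
proof -
  have "tidx n k = {xs. set xs \<subseteq> {..<n} \<and> length xs = k}" by (auto simp: tidx_def)
  then show ?thesis using finite_lists_length_eq[of "{..<n}" k] by simp
qed

lemma length_tidx: "I \<in> tidx n k \<Longrightarrow> length I = k"
  by (simp add: tidx_def)

lemma nth_tidx_less: "I \<in> tidx n k \<Longrightarrow> x < k \<Longrightarrow> I ! x < n"
  unfolding tidx_def by (auto dest: nth_mem)

lemma tidxI: "length I = k \<Longrightarrow> (\<And>x. x < k \<Longrightarrow> I ! x < n) \<Longrightarrow> I \<in> tidx n k"
  by (auto simp: tidx_def in_set_conv_nth)

lemma tidx_0: "tidx n 0 = {[]}"
  by (auto simp: tidx_def)

lemma length_swap_idx [simp]: "length (swap_idx a I) = length I"
  by (simp add: swap_idx_def)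

lemma nth_swap_idx:
  "Suc a < length I \<Longrightarrow> x < length I \<Longrightarrow> swap_idx a I ! x = I ! transpose a (Suc a) x"
  by (cases "x = a"; cases "x = Suc a") (simp_all add: swap_idx_def nth_list_update)

lemma nth_swap_idx_simps [simp]:
  "Suc a < length I \<Longrightarrow> swap_idx a I ! a = I ! Suc a"
  "Suc a < length I \<Longrightarrow> swap_idx a I ! Suc a = I ! a"
  by (simp_all add: nth_swap_idx)

lemma nth_swap_idx_other:
  "x \<noteq> a \<Longrightarrow> x \<noteq> Suc a \<Longrightarrow> swap_idx a I ! x = I ! x"
  by (simp add: swap_idx_def)

lemma swap_idx_swap_idx [simp]: "Suc a < length I \<Longrightarrow> swap_idx a (swap_idx a I) = I"
  by (rule nth_equalityI) (simp_all add: nth_swap_idx transpose_def)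

lemma swap_idx_same: "Suc a < length I \<Longrightarrow> I ! a = I ! Suc a \<Longrightarrow> swap_idx a I = I"
  by (rule nth_equalityI) (auto simp: nth_swap_idx transpose_def)

lemma swap_idx_in_tidx: "I \<in> tidx n k \<Longrightarrow> Suc a < k \<Longrightarrow> swap_idx a I \<in> tidx n k"
  by (rule tidxI) (auto simp: length_tidx nth_swap_idx transpose_def intro: nth_tidx_less)

lemma sum_tidx_swap_idx:
  assumes "Suc a < k"
  shows "(\<Sum>J\<in>tidx n k. f (swap_idx a J)) = (\<Sum>J\<in>tidx n k. f J)"
  by (rule sum.reindex_bij_witness[of _ "swap_idx a" "swap_idx a"])
     (use assms in \<open>auto simp: swap_idx_in_tidx length_tidx\<close>)

definition valid_word :: "nat \<Rightarrow> nat list \<Rightarrow> bool" where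
  "valid_word k w \<longleftrightarrow> (\<forall>a\<in>set w. Suc a < k)"

lemma perm_of_word_Nil [simp]: "perm_of_word [] = id"
  by (simp add: perm_of_word_def)

lemma perm_of_word_Cons [simp]: "perm_of_word (a # w) = transpose a (Suc a) \<circ> perm_of_word w"
  by (simp add: perm_of_word_def)

lemma perm_of_word_append [simp]: "perm_of_word (u @ w) = perm_of_word u \<circ> perm_of_word w"
  by (induction u) (auto simp: o_assoc)

lemma perm_of_word_permutes: "valid_word k w \<Longrightarrow> perm_of_word w permutes {..<k}"
  by (induction w) (auto simp: valid_word_def permutes_id intro!: permutes_compose permutes_swap_id)

lemma permutation_perm_of_word: "permutation (perm_of_word w)"
  by (induction w)
     (simp_all only: perm_of_word_Nil perm_of_word_Cons permutation_id permutation_compose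
       permutation_swap_id)

lemma sign_perm_of_word: "sign (perm_of_word w) = (-1) ^ length w"
proof (induction w)
  case (Cons a w)
  then show ?case
    by (simp only: perm_of_word_Cons sign_compose[OF permutation_swap_id permutation_perm_of_word]
        sign_swap_id) simp
qed simp

lemma transpose_has_word:
  assumes "i < j" "j < k"
  shows "\<exists>w. valid_word k w \<and> perm_of_word w = transpose i j"
  using assms
proof (induction "j - i" arbitrary: i)
  case 0
  then show ?case by simp
next
  case (Suc d)
  show ?case
  proof (cases "j = Suc i")
    case True
    then show ?thesis using Suc.prems by (intro exI[of _ "[i]"]) (simp add: valid_word_def)
  next
    case False
    have "d = j - Suc i" "Suc i < j"
      using Suc False by auto
    then obtain w where w: "valid_word k w" "perm_of_word w = transpose (Suc i) j"
      using Suc.hyps(1) Suc.prems(2) by blast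
    have "transpose i (Suc i) \<circ> transpose (Suc i) j \<circ> transpose i (Suc i) = transpose i j"
      using False Suc.prems by (intro transpose_comp_triple) auto
    then have "perm_of_word ([i] @ w @ [i]) = transpose i j"
      by (simp add: w o_assoc)
    moreover have "valid_word k ([i] @ w @ [i])"
      using w(1) Suc.prems by (auto simp: valid_word_def)
    ultimately show ?thesis by blast
  qed
qed

lemma permutes_has_word:
  assumes "\<sigma> permutes {..<k}"
  shows "\<exists>w. valid_word k w \<and> perm_of_word w = \<sigma>"
  using assms finite_lessThan
proof (induction rule: permutes_induct)
  case id
  show ?case by (intro exI[of _ "[]"]) (simp add: valid_word_def)
next
  case (swap a b \<sigma>)
  obtain w where w: "valid_word k w" "perm_of_word w = \<sigma>"
    using swap.IH by blast
  obtain u where u: "valid_word k u" "perm_of_word u = transpose a b"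
    using transpose_has_word[of a b k] transpose_has_word[of b a k] swap.hyps
    by (cases a b rule: linorder_cases) (auto simp: transpose_commute)
  show ?case
    using w u by (intro exI[of _ "u @ w"]) (auto simp: valid_word_def)
qed

section \<open>The representation \<open>P_q\<close> and the q-antisymmetrizer\<close>

lemma tmul_Pswap:
  assumes "I \<in> tidx n k" "Suc a < k"
  shows "tmul n k (Pswap q a) B I J = q (I ! Suc a) (I ! a) * B (swap_idx a I) J"
proof -
  have "tmul n k (Pswap q a) B I J
      = (\<Sum>L\<in>tidx n k. if L = swap_idx a I then q (I ! Suc a) (I ! a) * B L J else 0)"
    unfolding tmul_def by (intro sum.cong) (simp_all add: Pswap_def)
  then show ?thesis
    using swap_idx_in_tidx[OF assms] by simp
qed

lemma Pword_Nil: "Pword q n k [] = tid"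
  by (simp add: Pword_def)

lemma Pword_Cons: "Pword q n k (a # w) = tmul n k (Pswap q a) (Pword q n k w)"
  by (simp add: Pword_def)

lemma tmul_tid_left:
  assumes "I \<in> tidx n k"
  shows "tmul n k tid B I J = B I J"
proof -
  have "tmul n k tid B I J = (\<Sum>L\<in>tidx n k. if I = L then B L J else 0)"
    unfolding tmul_def tid_def by (intro sum.cong) simp_all
  then show ?thesis using assms by simp
qed

lemma Pword_append:
  assumes "valid_word k w" "I \<in> tidx n k"
  shows "Pword q n k (w @ u) I J = tmul n k (Pword q n k w) (Pword q n k u) I J"
  using assms
proof (induction w arbitrary: I)
  case Nil
  then show ?case by (simp add: Pword_Nil tmul_tid_left)
next
  case (Cons a w)
  then have a: "Suc a < k" and w: "valid_word k w"
    by (auto simp: valid_word_def)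
  have "Pword q n k ((a # w) @ u) I J
      = q (I ! Suc a) (I ! a) * tmul n k (Pword q n k w) (Pword q n k u) (swap_idx a I) J"
    using Cons.IH[OF w swap_idx_in_tidx[OF Cons.prems(2) a]] tmul_Pswap[OF Cons.prems(2) a]
    by (simp add: Pword_Cons)
  also have "\<dots> = tmul n k (Pword q n k (a # w)) (Pword q n k u) I J"
    using tmul_Pswap[OF Cons.prems(2) a]
    by (simp add: Pword_Cons tmul_def sum_distrib_left mult.assoc)
  finally show ?case .
qed

lemma Pword_snoc:
  assumes "valid_word k w" "Suc a < k" "I \<in> tidx n k" "J \<in> tidx n k"
  shows "Pword q n k (w @ [a]) I J = Pword q n k w I (swap_idx a J) * q (J ! a) (J ! Suc a)"
proof -
  have "Pword q n k [a] L J = (if L = swap_idx a J then q (J ! a) (J ! Suc a) else 0)"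
    if "L \<in> tidx n k" for L
    using tmul_Pswap[OF that assms(2)] assms(2,4) that
    by (auto simp: Pword_Cons Pword_Nil tid_def length_tidx)
  then have "Pword q n k (w @ [a]) I J
      = (\<Sum>L\<in>tidx n k. if L = swap_idx a J then Pword q n k w I L * q (J ! a) (J ! Suc a) else 0)"
    unfolding Pword_append[OF assms(1,3)] tmul_def by (intro sum.cong) simp_all
  then show ?thesis
    using swap_idx_in_tidx[OF assms(4,2)] by simp
qed

definition inversions :: "nat \<Rightarrow> (nat \<Rightarrow> nat) \<Rightarrow> (nat \<times> nat) set" where
  "inversions k \<sigma> = {(x, y). x < y \<and> y < k \<and> \<sigma> y < \<sigma> x}"

(* The matrix of P_q^\<sigma>: e_I goes to e_{I \<circ> \<sigma>}, with one factor q for each inversion of \<sigma>. *)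
definition qperm ::
    "(nat \<Rightarrow> nat \<Rightarrow> complex) \<Rightarrow> nat \<Rightarrow> (nat \<Rightarrow> nat) \<Rightarrow> nat list \<Rightarrow> nat list \<Rightarrow> complex" where
  "qperm q k \<sigma> I J =
     (if J = map (\<lambda>x. I ! \<sigma> x) [0..<k]
      then \<Prod>(x, y)\<in>inversions k \<sigma>. q (I ! \<sigma> x) (I ! \<sigma> y)
      else 0)"

lemma prod_inversions:
  "(\<Prod>(x, y)\<in>inversions k \<sigma>. f x y) =
   (\<Prod>(x, y)\<in>{(x, y). x < y \<and> y < k}. if \<sigma> y < \<sigma> x then f x y else 1)"
proof -
  define P where "P = {(x, y). x < y \<and> y < (k::nat)}"
  have "finite P"
    by (rule finite_subset[of _ "{..<k} \<times> {..<k}"]) (auto simp: P_def)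
  moreover have "inversions k \<sigma> = {p \<in> P. \<sigma> (snd p) < \<sigma> (fst p)}"
    by (auto simp: inversions_def P_def)
  ultimately have "(\<Prod>p\<in>inversions k \<sigma>. f (fst p) (snd p))
      = (\<Prod>p\<in>P. if \<sigma> (snd p) < \<sigma> (fst p) then f (fst p) (snd p) else 1)"
    by (simp only: prod.inter_filter)
  then show ?thesis
    by (simp add: P_def case_prod_unfold)
qed

lemma transpose_Suc_less_iff:
  "{u, v} \<noteq> {a, Suc a} \<Longrightarrow> u \<noteq> v
   \<Longrightarrow> (transpose a (Suc a) v < transpose a (Suc a) u) = (v < u)"
  by (auto simp: transpose_def doubleton_eq_iff)

lemma prod_inversions_transpose:
  fixes g :: "nat \<Rightarrow> nat \<Rightarrow> complex"
  assumes \<sigma>: "\<sigma> permutes {..<k}" and a: "Suc a < k" and g: "g a (Suc a) * g (Suc a) a = 1"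
  defines "\<tau> \<equiv> transpose a (Suc a)"
  shows "g (Suc a) a * (\<Prod>(x, y)\<in>inversions k \<sigma>. g (\<tau> (\<sigma> x)) (\<tau> (\<sigma> y)))
       = (\<Prod>(x, y)\<in>inversions k (\<tau> \<circ> \<sigma>). g (\<tau> (\<sigma> x)) (\<tau> (\<sigma> y)))"
proof -
  define P where "P = {(x, y). x < y \<and> y < k}"
  define f where
    "f \<rho> = (\<lambda>(x, y). if \<rho> y < \<rho> x then g (\<tau> (\<sigma> x)) (\<tau> (\<sigma> y)) else 1)" for \<rho> :: "nat \<Rightarrow> nat"
  have fin: "finite P"
    by (rule finite_subset[of _ "{..<k} \<times> {..<k}"]) (auto simp: P_def)
  obtain x0 y0 where x0: "x0 < k" "\<sigma> x0 = a" and y0: "y0 < k" "\<sigma> y0 = Suc a"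
    using a permutes_image[OF \<sigma>] by (metis Suc_lessD imageE lessThan_iff)
  have inj: "\<sigma> x = \<sigma> y \<longleftrightarrow> x = y" for x y
    using permutes_inj[OF \<sigma>] by (auto dest: injD)
  define p0 where "p0 = (min x0 y0, max x0 y0)"
  have p0: "p0 \<in> P"
    using x0 y0 inj[of x0 y0] by (auto simp: P_def p0_def)
  have same: "f (\<tau> \<circ> \<sigma>) p = f \<sigma> p" if hp: "p \<in> P - {p0}" for p
  proof -
    obtain x y where p: "p = (x, y)" "x < y" "(x, y) \<noteq> p0"
      using hp by (cases p) (auto simp: P_def)
    have "{\<sigma> x, \<sigma> y} \<noteq> {a, Suc a}"
    proof
      assume "{\<sigma> x, \<sigma> y} = {a, Suc a}"
      then have "\<sigma> ` {x, y} = \<sigma> ` {x0, y0}"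
        using x0 y0 by simp
      then have "{x, y} = {x0, y0}"
        by (simp only: inj_image_eq_iff[OF permutes_inj[OF \<sigma>]])
      then show False
        using p by (auto simp: p0_def doubleton_eq_iff min_def max_def)
    qed
    moreover have "\<sigma> x \<noteq> \<sigma> y"
      using p inj by simp
    ultimately show ?thesis
      by (simp add: f_def p \<tau>_def transpose_Suc_less_iff)
  qed
  have "(\<Prod>p\<in>P. f (\<tau> \<circ> \<sigma>) p) = f (\<tau> \<circ> \<sigma>) p0 * (\<Prod>p\<in>P - {p0}. f (\<tau> \<circ> \<sigma>) p)"
    by (rule prod.remove[OF fin p0])
  also have "(\<Prod>p\<in>P - {p0}. f (\<tau> \<circ> \<sigma>) p) = (\<Prod>p\<in>P - {p0}. f \<sigma> p)"
    by (rule prod.cong[OF refl same])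
  finally have "(\<Prod>p\<in>P. f (\<tau> \<circ> \<sigma>) p) = f (\<tau> \<circ> \<sigma>) p0 * (\<Prod>p\<in>P - {p0}. f \<sigma> p)" .
  moreover have "(\<Prod>p\<in>P. f \<sigma> p) = f \<sigma> p0 * (\<Prod>p\<in>P - {p0}. f \<sigma> p)"
    using prod.remove[OF fin p0] by simp
  moreover have "g (Suc a) a * f \<sigma> p0 = f (\<tau> \<circ> \<sigma>) p0"
    using x0 y0 g inj[of x0 y0]
    by (cases "x0 < y0") (auto simp: f_def p0_def \<tau>_def mult.commute)
  ultimately have "g (Suc a) a * (\<Prod>p\<in>P. f \<sigma> p) = (\<Prod>p\<in>P. f (\<tau> \<circ> \<sigma>) p)"
    by (simp add: mult.assoc)
  then show ?thesis
    unfolding prod_inversions P_def f_def by (simp add: case_prod_unfold)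
qed

lemma Pword_eq_qperm:
  assumes "valid_word k w" "is_parametric n q" "I \<in> tidx n k"
  shows "Pword q n k w I J = qperm q k (perm_of_word w) I J"
  using assms(1,3)
proof (induction w arbitrary: I)
  case Nil
  have "map (\<lambda>x. I ! x) [0..<k] = I"
    using length_tidx[OF Nil.prems(2)] map_nth[of I] by simp
  moreover have "inversions k (\<lambda>x. x) = {}"
    by (auto simp: inversions_def)
  ultimately show ?case
    by (auto simp: Pword_Nil qperm_def tid_def)
next
  case (Cons a w)
  then have a: "Suc a < k" and w: "valid_word k w"
    by (auto simp: valid_word_def)
  define \<sigma> where "\<sigma> = perm_of_word w"
  define \<tau> where "\<tau> = transpose a (Suc a)"
  have \<sigma>: "\<sigma> permutes {..<k}"
    unfolding \<sigma>_def using perm_of_word_permutes[OF w] .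
  have swap_I: "swap_idx a I ! \<sigma> x = I ! \<tau> (\<sigma> x)" if "x < k" for x
    using a that permutes_in_image[OF \<sigma>] length_tidx[OF Cons.prems(2)]
    by (simp add: \<tau>_def nth_swap_idx)
  have q: "q (I ! a) (I ! Suc a) * q (I ! Suc a) (I ! a) = 1"
    using assms(2) a nth_tidx_less[OF Cons.prems(2)] by (simp add: is_parametric_def)
  have inv: "(\<Prod>(x, y)\<in>inversions k \<sigma>. q (swap_idx a I ! \<sigma> x) (swap_idx a I ! \<sigma> y))
      = (\<Prod>(x, y)\<in>inversions k \<sigma>. q (I ! \<tau> (\<sigma> x)) (I ! \<tau> (\<sigma> y)))"
    by (intro prod.cong) (auto simp: inversions_def swap_I)
  have "Pword q n k (a # w) I J = q (I ! Suc a) (I ! a) * qperm q k \<sigma> (swap_idx a I) J"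
    using Cons.IH[OF w swap_idx_in_tidx[OF Cons.prems(2) a]] tmul_Pswap[OF Cons.prems(2) a]
    by (simp add: Pword_Cons \<sigma>_def)
  also have "\<dots> = qperm q k (\<tau> \<circ> \<sigma>) I J"
  proof -
    have "map (\<lambda>x. swap_idx a I ! \<sigma> x) [0..<k] = map (\<lambda>x. I ! (\<tau> \<circ> \<sigma>) x) [0..<k]"
      by (rule map_cong) (simp_all add: swap_I)
    then show ?thesis
      unfolding qperm_def inv
      using prod_inversions_transpose[OF \<sigma> a, of "\<lambda>u v. q (I ! u) (I ! v)"] q
      by (simp add: \<tau>_def)
  qed
  finally show ?case
    by (simp only: \<sigma>_def \<tau>_def perm_of_word_Cons)
qed

lemma Pperm_eq_Pword:
  assumes "valid_word k w" "is_parametric n q" "I \<in> tidx n k"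
  shows "Pperm q n k (perm_of_word w) I J = Pword q n k w I J"
proof -
  define w' where "w' = (SOME w'. (\<forall>a\<in>set w'. Suc a < k) \<and> perm_of_word w' = perm_of_word w)"
  have "(\<forall>a\<in>set w'. Suc a < k) \<and> perm_of_word w' = perm_of_word w"
    unfolding w'_def by (rule someI[of _ w]) (use assms(1) valid_word_def in blast)
  then have "valid_word k w'" "perm_of_word w' = perm_of_word w"
    by (simp_all add: valid_word_def)
  then show ?thesis
    using Pword_eq_qperm[OF _ assms(2,3)] assms(1) by (simp add: Pperm_def w'_def)
qed

lemma Pperm_comp_transpose:
  assumes "\<sigma> permutes {..<k}" "Suc a < k" "is_parametric n q" "I \<in> tidx n k" "J \<in> tidx n k"
  shows "Pperm q n k (\<sigma> \<circ> transpose a (Suc a)) I J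
       = Pperm q n k \<sigma> I (swap_idx a J) * q (J ! a) (J ! Suc a)"
proof -
  obtain w where w: "valid_word k w" "perm_of_word w = \<sigma>"
    using permutes_has_word[OF assms(1)] by blast
  have "valid_word k (w @ [a])"
    using w(1) assms(2) by (simp add: valid_word_def)
  then have "Pperm q n k (\<sigma> \<circ> transpose a (Suc a)) I J = Pword q n k (w @ [a]) I J"
    using Pperm_eq_Pword[OF _ assms(3,4)] w(2) by fastforce
  then show ?thesis
    using Pword_snoc[OF w(1) assms(2,4,5)] Pperm_eq_Pword[OF w(1) assms(3,4)] w(2) by simp
qed

(* Entrywise form of X P_q^{(a,a+1)} = -X for a covector X on (\<complex>^n)^{\<otimes>k}. *)
definition alternating ::
    "(nat \<Rightarrow> nat \<Rightarrow> complex) \<Rightarrow> nat \<Rightarrow> nat \<Rightarrow> (nat list \<Rightarrow> 'a::cplx_algebra_1) \<Rightarrow> bool" where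
  "alternating q n k X \<longleftrightarrow>
     (\<forall>J\<in>tidx n k. \<forall>a. Suc a < k \<longrightarrow> X J = - scaleC (q (J ! a) (J ! Suc a)) (X (swap_idx a J)))"

lemma alternatingD:
  "alternating q n k X \<Longrightarrow> J \<in> tidx n k \<Longrightarrow> Suc a < k
   \<Longrightarrow> X J = - scaleC (q (J ! a) (J ! Suc a)) (X (swap_idx a J))"
  by (simp add: alternating_def)

lemma alternating_Aq:
  assumes "is_parametric n q" "I \<in> tidx n k"
  shows "alternating q n k (Aq q n k I)"
  unfolding alternating_def
proof (intro ballI allI impI)
  fix J a
  assume J: "J \<in> tidx n k" and a: "Suc a < k"
  define S where "S = {\<sigma>. \<sigma> permutes {..<k}}"
  define \<tau> where "\<tau> = transpose a (Suc a)"
  have \<tau>: "\<tau> permutes {..<k}"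
    using a by (simp add: \<tau>_def permutes_swap_id)
  have sign: "sign (\<sigma> \<circ> \<tau>) = - sign \<sigma>" if "\<sigma> permutes {..<k}" for \<sigma>
    using that permutes_imp_permutation[OF finite_lessThan]
    by (simp add: \<tau>_def sign_compose permutation_swap_id sign_swap_id)
  have "(\<Sum>\<sigma>\<in>S. of_int (sign \<sigma>) * Pperm q n k \<sigma> I J)
      = (\<Sum>\<sigma>\<in>S. of_int (sign (\<sigma> \<circ> \<tau>)) * Pperm q n k (\<sigma> \<circ> \<tau>) I J)"
    unfolding S_def by (rule sum_permutations_compose_right[OF \<tau>])
  also have "\<dots> = - q (J ! a) (J ! Suc a)
      * (\<Sum>\<sigma>\<in>S. of_int (sign \<sigma>) * Pperm q n k \<sigma> I (swap_idx a J))"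
    unfolding sum_distrib_left
    by (intro sum.cong refl)
       (simp add: S_def sign \<tau>_def[symmetric] Pperm_comp_transpose[OF _ a assms J, folded \<tau>_def])
  finally show "Aq q n k I J = - scaleC (q (J ! a) (J ! Suc a)) (Aq q n k I (swap_idx a J))"
    by (simp add: Aq_def S_def)
qed

lemma alternating_eq_0_if_repeated:
  assumes "alternating q n k X" "is_parametric n q" "J \<in> tidx n k"
    and "i < j" "j < k" "J ! i = J ! j"
  shows "X J = 0"
  using assms(3-6)
proof (induction "j - i" arbitrary: i J)
  case 0
  then show ?case by simp
next
  case (Suc d)
  have i: "Suc i < k"
    using Suc.prems by simp
  have alt: "X J = - scaleC (q (J ! i) (J ! Suc i)) (X (swap_idx i J))"
    by (rule alternatingD[OF assms(1) Suc.prems(1) i])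
  show ?case
  proof (cases "j = Suc i")
    case True
    have "swap_idx i J = J"
      using Suc.prems True by (simp add: swap_idx_same length_tidx)
    moreover have "q (J ! i) (J ! Suc i) = 1"
      using Suc.prems True assms(2) nth_tidx_less[OF Suc.prems(1)] by (simp add: is_parametric_def)
    ultimately have "X J = - X J"
      using alt by (simp add: scaleC_one)
    then have "X J + X J = 0"
      by (simp only: eq_neg_iff_add_eq_0)
    then show ?thesis
      by (rule add_self_eq_0_imp_eq_0)
  next
    case False
    have "X (swap_idx i J) = 0"
      using Suc False length_tidx[OF Suc.prems(1)]
      by (intro Suc.hyps(1)[of "Suc i"]) (simp_all add: swap_idx_in_tidx nth_swap_idx transpose_def)
    then show ?thesis
      using alt by simp
  qed
qed

lemma alternating_eq_0_if_gt:
  assumes "alternating q n k X" "is_parametric n q" "J \<in> tidx n k" "n < k"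
  shows "X J = 0"
proof -
  have "\<not> distinct J"
  proof
    assume "distinct J"
    then have "k = card (set J)"
      using length_tidx[OF assms(3)] distinct_card by metis
    also have "\<dots> \<le> n"
      using assms(3) card_mono[OF finite_lessThan, of "set J"] by (simp add: tidx_def)
    finally show False
      using assms(4) by simp
  qed
  then obtain i j where ij: "i < k" "j < k" "i \<noteq> j" "J ! i = J ! j"
    unfolding distinct_conv_nth length_tidx[OF assms(3)] by blast
  show ?thesis
  proof (cases "i < j")
    case True
    then show ?thesis
      by (rule alternating_eq_0_if_repeated[OF assms(1-3) _ ij(2,4)])
  next
    case False
    then have "j < i"
      using ij(3) by simp
    then show ?thesis
      using alternating_eq_0_if_repeated[OF assms(1-3) _ ij(1)] ij(4) by simp
  qed
qed

lemma ek_eq_0_if_gt: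
  assumes "is_parametric n q" "n < k"
  shows "ek q n k X = 0"
  using assms alternating_eq_0_if_gt[OF alternating_Aq[OF assms(1)] assms(1) _ assms(2)]
  by (simp add: ek_def)

lemma sum_alternating_symmetric_eq_0:
  fixes A :: "nat list \<Rightarrow> complex" and F :: "nat list \<Rightarrow> 'a::cplx_algebra_1"
  assumes "is_parametric n q" "alternating q n k A" "Suc a < k"
    and F: "\<And>J. J \<in> tidx n k \<Longrightarrow> F J = scaleC (q (J ! Suc a) (J ! a)) (F (swap_idx a J))"
  shows "(\<Sum>J\<in>tidx n k. scaleC (A J) (F J)) = 0"
proof -
  have flip: "scaleC (A (swap_idx a J)) (F (swap_idx a J)) = - scaleC (A J) (F J)"
    if J: "J \<in> tidx n k" for J
  proof -
    define c where "c = q (J ! a) (J ! Suc a)"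
    define c' where "c' = q (J ! Suc a) (J ! a)"
    have "c * c' = 1"
      using assms(1,3) nth_tidx_less[OF J] by (simp add: is_parametric_def c_def c'_def)
    then have "- c * A (swap_idx a J) * c' = - A (swap_idx a J)"
      by (simp add: mult.commute mult.left_commute)
    moreover have "scaleC (A J) (F J) = scaleC (- c * A (swap_idx a J) * c') (F (swap_idx a J))"
      using alternatingD[OF assms(2) J assms(3)] F[OF J] by (simp add: scaleC_scaleC c_def c'_def)
    ultimately have "scaleC (A J) (F J) = scaleC (- A (swap_idx a J)) (F (swap_idx a J))"
      by metis
    then show ?thesis
      by (simp add: scaleC_minus_left)
  qed
  have "(\<Sum>J\<in>tidx n k. scaleC (A J) (F J))
      = (\<Sum>J\<in>tidx n k. scaleC (A (swap_idx a J)) (F (swap_idx a J)))"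
    by (rule sum_tidx_swap_idx[OF assms(3), symmetric])
  also have "\<dots> = - (\<Sum>J\<in>tidx n k. scaleC (A J) (F J))"
    by (simp add: flip sum_negf)
  finally have "(\<Sum>J\<in>tidx n k. scaleC (A J) (F J)) + (\<Sum>J\<in>tidx n k. scaleC (A J) (F J)) = 0"
    by (simp only: eq_neg_iff_add_eq_0)
  then show ?thesis
    by (rule add_self_eq_0_imp_eq_0)
qed

lemma alternating_Pword:
  assumes "alternating p m k X" "valid_word k w" "L \<in> tidx m k"
  shows "(\<Sum>L'\<in>tidx m k. scaleC (Pword p m k w L' L) (X L')) = scaleC ((-1) ^ length w) (X L)"
  using assms(2)
proof (induction w)
  case Nil
  have "(\<Sum>L'\<in>tidx m k. scaleC (Pword p m k [] L' L) (X L')) = (\<Sum>L'\<in>tidx m k. if L' = L then X L' else 0)"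
    by (intro sum.cong) (simp_all add: Pword_Nil tid_def scaleC_one)
  then show ?case
    using assms(3) by (simp add: scaleC_one)
next
  case (Cons a w)
  then have a: "Suc a < k" and w: "valid_word k w"
    by (auto simp: valid_word_def)
  let ?s = "swap_idx a"
  have "(\<Sum>L'\<in>tidx m k. scaleC (Pword p m k (a # w) L' L) (X L'))
      = (\<Sum>L'\<in>tidx m k. scaleC (p (L' ! Suc a) (L' ! a) * Pword p m k w (?s L') L) (X L'))"
    by (intro sum.cong) (simp_all add: Pword_Cons tmul_Pswap[OF _ a])
  also have "\<dots> = (\<Sum>L'\<in>tidx m k. scaleC (p (?s L' ! Suc a) (?s L' ! a) * Pword p m k w (?s (?s L')) L) (X (?s L')))"
    by (rule sum_tidx_swap_idx[OF a, symmetric])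
  also have "\<dots> = (\<Sum>L'\<in>tidx m k. scaleC (Pword p m k w L' L) (- X L'))"
  proof (intro sum.cong refl)
    fix L' assume L': "L' \<in> tidx m k"
    then show "scaleC (p (?s L' ! Suc a) (?s L' ! a) * Pword p m k w (?s (?s L')) L) (X (?s L'))
        = scaleC (Pword p m k w L' L) (- X L')"
      using alternatingD[OF assms(1) L' a] a
      by (simp add: length_tidx scaleC_scaleC mult.commute)
  qed
  also have "\<dots> = scaleC ((-1) ^ length (a # w)) (X L)"
    using Cons.IH[OF w] by (simp add: scaleC_minus_right scaleC_minus_left sum_negf)
  finally show ?case .
qed

lemma alternating_Aq_fixed:
  assumes "is_parametric m p" "alternating p m k X" "L \<in> tidx m k"
  shows "(\<Sum>L'\<in>tidx m k. scaleC (Aq p m k L' L) (X L')) = X L"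
proof -
  define S where "S = {\<sigma>. \<sigma> permutes {..<k}}"
  have per_perm: "(\<Sum>L'\<in>tidx m k. scaleC (of_int (sign \<sigma>) * Pperm p m k \<sigma> L' L) (X L')) = X L"
    if "\<sigma> \<in> S" for \<sigma>
  proof -
    obtain w where w: "valid_word k w" "perm_of_word w = \<sigma>"
      using permutes_has_word \<open>\<sigma> \<in> S\<close> by (auto simp: S_def)
    have "(\<Sum>L'\<in>tidx m k. scaleC (of_int (sign \<sigma>) * Pperm p m k \<sigma> L' L) (X L'))
        = scaleC (of_int (sign \<sigma>)) (\<Sum>L'\<in>tidx m k. scaleC (Pword p m k w L' L) (X L'))"
      using Pperm_eq_Pword[OF w(1) assms(1)] w(2)
      by (simp add: scaleC_sum_right scaleC_scaleC)
    also have "\<dots> = scaleC (of_int (sign \<sigma> * sign \<sigma>)) (X L)"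
      using alternating_Pword[OF assms(2) w(1) assms(3)] sign_perm_of_word[of w] w(2)
      by (simp add: scaleC_scaleC)
    finally show ?thesis
      by (simp add: scaleC_one)
  qed
  have "(\<Sum>L'\<in>tidx m k. scaleC (Aq p m k L' L) (X L'))
      = (\<Sum>L'\<in>tidx m k. scaleC (1 / fact k)
           (\<Sum>\<sigma>\<in>S. scaleC (of_int (sign \<sigma>) * Pperm p m k \<sigma> L' L) (X L')))"
    unfolding Aq_def S_def by (simp only: scaleC_scaleC[symmetric] scaleC_sum_left)
  also have "\<dots> = scaleC (1 / fact k)
      (\<Sum>\<sigma>\<in>S. \<Sum>L'\<in>tidx m k. scaleC (of_int (sign \<sigma>) * Pperm p m k \<sigma> L' L) (X L'))"
    by (subst sum.swap) (simp only: scaleC_sum_right)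
  also have "\<dots> = scaleC (1 / fact k) (scaleC (of_nat (card S)) (X L))"
    by (simp add: per_perm scaleC_sum_left[of "\<lambda>_. 1", simplified] scaleC_one)
  also have "card S = fact k"
    unfolding S_def by (simp add: card_permutations)
  finally show ?thesis
    by (simp add: scaleC_scaleC scaleC_one)
qed

section \<open>Manin matrices\<close>

lemma manin_rel_ordered:
  assumes "is_parametric m p" "manin q p n m M" "i < j" "j < n" "k < m" "l < m"
  shows "M i k * M j l + scaleC (p k l) (M i l * M j k)
       = scaleC (q j i) (M j k * M i l + scaleC (p k l) (M j l * M i k))"
proof -
  have col: "M i k * M j k = scaleC (q j i) (M j k * M i k)" if "k < m" for k
    using assms(2-4) that by (simp add: manin_def)
  have cross: "M i k * M j l - scaleC (q j i * p k l) (M j l * M i k)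
      + scaleC (p k l) (M i l * M j k) - scaleC (q j i) (M j k * M i l) = 0"
    if "k < l" "l < m" for k l
    using assms(2-4) that unfolding manin_def by blast
  consider "k < l" | "k = l" | "l < k"
    by linarith
  then show ?thesis
  proof cases
    case 1
    then show ?thesis
      using cross[OF 1 assms(6)]
      by (simp add: scaleC_add_right scaleC_scaleC algebra_simps)
  next
    case 2
    then show ?thesis
      using col[OF assms(6)] assms(1,6) by (simp add: is_parametric_def scaleC_one scaleC_add_right)
  next
    case 3
    have inv: "p k l * p l k = 1"
      using assms(1,5,6) by (simp add: is_parametric_def)
    then have inv': "p k l * (q j i * p l k) = q j i"
      by (metis mult.left_commute mult.right_neutral)
    have "scaleC (p k l) (M i l * M j k - scaleC (q j i * p l k) (M j k * M i l)
        + scaleC (p l k) (M i k * M j l) - scaleC (q j i) (M j l * M i k))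
      = scaleC (p k l) (M i l * M j k) - scaleC (q j i) (M j k * M i l)
        + M i k * M j l - scaleC (q j i * p k l) (M j l * M i k)"
      by (simp only: scaleC_add_right scaleC_diff_right scaleC_scaleC inv inv' scaleC_one
          mult.commute[of "p k l" "q j i"])
    then show ?thesis
      using cross[OF 3 assms(5)]
      by (simp add: scaleC_add_right scaleC_scaleC algebra_simps)
  qed
qed

lemma manin_rel:
  assumes "is_parametric n q" "is_parametric m p" "manin q p n m M"
    and "i < n" "j < n" "k < m" "l < m"
  shows "M i k * M j l + scaleC (p k l) (M i l * M j k)
       = scaleC (q j i) (M j k * M i l + scaleC (p k l) (M j l * M i k))"
proof -
  consider "i < j" | "i = j" | "j < i"
    by linarith
  then show ?thesis
  proof cases
    case 1
    show ?thesis
      using manin_rel_ordered[OF assms(2,3) 1 assms(5-7)] .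
  next
    case 2
    then show ?thesis
      using assms(1,4) by (simp add: is_parametric_def scaleC_one)
  next
    case 3
    have inv: "q j i * q i j = 1"
      using assms(1,4,5) by (simp add: is_parametric_def)
    then have inv': "q j i * (q i j * p k l) = p k l"
      by (metis mult.assoc mult_1)
    show ?thesis
      using manin_rel_ordered[OF assms(2,3) 3 assms(4,6,7)]
      by (simp add: scaleC_add_right scaleC_scaleC scaleC_one inv inv')
  qed
qed

definition tpow ::
    "(nat \<Rightarrow> nat \<Rightarrow> 'a::cplx_algebra_1) \<Rightarrow> nat \<Rightarrow> nat list \<Rightarrow> nat list \<Rightarrow> 'a" where
  "tpow X k J L = prod_list (map (\<lambda>x. X (J ! x) (L ! x)) [0..<k])"

lemma tpow_split:
  assumes "Suc a < k"
  shows "tpow X k J L = prod_list (map (\<lambda>x. X (J ! x) (L ! x)) [0..<a])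
      * (X (J ! a) (L ! a) * X (J ! Suc a) (L ! Suc a))
      * prod_list (map (\<lambda>x. X (J ! x) (L ! x)) [Suc (Suc a)..<k])"
proof -
  have "[0..<k] = [0..<a] @ [a..<k]"
    using upt_add_eq_append[of 0 a "k - a"] assms by simp
  also have "[a..<k] = a # Suc a # [Suc (Suc a)..<k]"
    using assms by (simp add: upt_conv_Cons)
  finally show ?thesis
    by (simp add: tpow_def mult.assoc)
qed

(* Entrywise form of (1 - P_q^{(a,a+1)}) M^{\<otimes>k} (1 + P_p^{(a,a+1)}) = 0. *)
lemma tpow_swap_rel:
  assumes "is_parametric n q" "is_parametric m p" "manin q p n m M"
    and "J \<in> tidx n k" "L \<in> tidx m k" "Suc a < k"
  shows "tpow M k J L + scaleC (p (L ! a) (L ! Suc a)) (tpow M k J (swap_idx a L))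
       = scaleC (q (J ! Suc a) (J ! a)) (tpow M k (swap_idx a J) L
           + scaleC (p (L ! a) (L ! Suc a)) (tpow M k (swap_idx a J) (swap_idx a L)))"
proof -
  define P where "P = prod_list (map (\<lambda>x. M (J ! x) (L ! x)) [0..<a])"
  define Q where "Q = prod_list (map (\<lambda>x. M (J ! x) (L ! x)) [Suc (Suc a)..<k])"
  have split: "tpow M k J' L' = P * (M (J' ! a) (L' ! a) * M (J' ! Suc a) (L' ! Suc a)) * Q"
    if "J' \<in> {J, swap_idx a J}" "L' \<in> {L, swap_idx a L}" for J' L'
  proof -
    have "J' ! x = J ! x" "L' ! x = L ! x" if "x \<noteq> a" "x \<noteq> Suc a" for x
      using \<open>J' \<in> _\<close> \<open>L' \<in> _\<close> that by (auto simp: nth_swap_idx_other)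
    then have "map (\<lambda>x. M (J' ! x) (L' ! x)) [0..<a] = map (\<lambda>x. M (J ! x) (L ! x)) [0..<a]"
      and "map (\<lambda>x. M (J' ! x) (L' ! x)) [Suc (Suc a)..<k] = map (\<lambda>x. M (J ! x) (L ! x)) [Suc (Suc a)..<k]"
      by (auto intro!: map_cong)
    then show ?thesis
      unfolding P_def Q_def by (metis tpow_split[OF assms(6)])
  qed
  define i where "i = J ! a"
  define j where "j = J ! Suc a"
  define k' where "k' = L ! a"
  define l where "l = L ! Suc a"
  have len: "Suc a < length J" "Suc a < length L"
    using assms(4-6) by (simp_all add: length_tidx)
  have "M i k' * M j l + scaleC (p k' l) (M i l * M j k')
      = scaleC (q j i) (M j k' * M i l + scaleC (p k' l) (M j l * M i k'))"
    unfolding i_def j_def k'_def l_def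
    using assms(4-6) by (intro manin_rel[OF assms(1-3)]) (simp_all add: nth_tidx_less)
  then have "P * (M i k' * M j l + scaleC (p k' l) (M i l * M j k')) * Q
      = P * scaleC (q j i) (M j k' * M i l + scaleC (p k' l) (M j l * M i k')) * Q"
    by simp
  then show ?thesis
    using len by (simp add: split i_def j_def k'_def l_def distrib_left distrib_right
        mult_scaleC_left mult_scaleC_right scaleC_add_right mult.assoc)
qed

lemma alternating_tpow_row:
  assumes "is_parametric n q" "is_parametric m p" "manin q p n m M" "I \<in> tidx n k"
  shows "alternating p m k (\<lambda>L. \<Sum>J\<in>tidx n k. scaleC (Aq q n k I J) (tpow M k J L))"
  unfolding alternating_def
proof (intro ballI allI impI)
  fix L a
  assume L: "L \<in> tidx m k" and a: "Suc a < k"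
  define c where "c = p (L ! a) (L ! Suc a)"
  define F where "F J = tpow M k J L + scaleC c (tpow M k J (swap_idx a L))" for J
  have "(\<Sum>J\<in>tidx n k. scaleC (Aq q n k I J) (F J)) = 0"
    using alternating_Aq[OF assms(1,4)] a
    by (rule sum_alternating_symmetric_eq_0[OF assms(1)])
       (simp add: F_def c_def tpow_swap_rel[OF assms(1-3) _ L a])
  then have "(\<Sum>J\<in>tidx n k. scaleC (Aq q n k I J) (tpow M k J L))
      + scaleC c (\<Sum>J\<in>tidx n k. scaleC (Aq q n k I J) (tpow M k J (swap_idx a L))) = 0"
    by (simp add: F_def scaleC_add_right sum.distrib scaleC_sum_right scaleC_scaleC mult.commute)
  then show "(\<Sum>J\<in>tidx n k. scaleC (Aq q n k I J) (tpow M k J L))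
      = - scaleC c (\<Sum>J\<in>tidx n k. scaleC (Aq q n k I J) (tpow M k J (swap_idx a L)))"
    by (simp add: eq_neg_iff_add_eq_0)
qed

section \<open>The coefficients of the characteristic polynomials of MN and NM\<close>

lemma prod_list_commute_elem:
  fixes y :: "'a::monoid_mult"
  assumes "\<forall>x\<in>set xs. x * y = y * x"
  shows "prod_list xs * y = y * prod_list xs"
  using assms by (induction xs) (simp_all add: mult.assoc, metis mult.assoc)

lemma prod_list_commute:
  fixes xs ys :: "'a::monoid_mult list"
  assumes "\<forall>x\<in>set xs. \<forall>y\<in>set ys. x * y = y * x"
  shows "prod_list xs * prod_list ys = prod_list ys * prod_list xs"
  using assms
proof (induction ys)
  case (Cons y ys)
  have y: "prod_list xs * y = y * prod_list xs"
    using Cons.prems by (intro prod_list_commute_elem) simp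
  have ys: "prod_list xs * prod_list ys = prod_list ys * prod_list xs"
    using Cons.prems by (intro Cons.IH) auto
  have "prod_list xs * prod_list (y # ys) = (prod_list xs * y) * prod_list ys"
    by (simp add: mult.assoc)
  also have "\<dots> = y * (prod_list xs * prod_list ys)"
    by (simp add: y mult.assoc)
  finally show ?case
    by (simp add: ys mult.assoc)
qed simp

lemma tpow_Suc: "tpow X (Suc k) J I = tpow X k J I * X (J ! k) (I ! k)"
  by (simp add: tpow_def)

lemma tpow_snoc_right: "length L = k \<Longrightarrow> tpow X k J (L @ [l]) = tpow X k J L"
  unfolding tpow_def by (intro arg_cong[where f = prod_list] map_cong) (simp_all add: nth_append)

lemma tpow_snoc_left: "length L = k \<Longrightarrow> tpow X k (L @ [l]) I = tpow X k L I"
  unfolding tpow_def by (intro arg_cong[where f = prod_list] map_cong) (simp_all add: nth_append)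

lemma sum_tidx_Suc:
  "(\<Sum>L\<in>tidx m (Suc k). g L) = (\<Sum>L\<in>tidx m k. \<Sum>l<m. g (L @ [l]))"
proof -
  have "(\<Sum>L\<in>tidx m (Suc k). g L) = (\<Sum>(L, l)\<in>tidx m k \<times> {..<m}. g (L @ [l]))"
  proof (rule sum.reindex_bij_witness[of _ "\<lambda>(L, l). L @ [l]" "\<lambda>L. (butlast L, last L)"])
    fix L assume "L \<in> tidx m (Suc k)"
    then have len: "length L = Suc k" and set: "set L \<subseteq> {..<m}"
      by (auto simp: tidx_def)
    then have ne: "L \<noteq> []"
      by auto
    have "last L < m"
      using set last_in_set[OF ne] by auto
    with len set ne show "(\<lambda>(L, l). L @ [l]) (butlast L, last L) = L"
      and "(butlast L, last L) \<in> tidx m k \<times> {..<m}"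
      and "(\<lambda>(L, l). g (L @ [l])) (butlast L, last L) = g L"
      by (auto simp: tidx_def dest: in_set_butlastD)
  qed (auto simp: tidx_def)
  then show ?thesis
    by (simp add: sum.cartesian_product)
qed

lemma tpow_matmul:
  assumes comm: "\<forall>i<m. \<forall>j<n. \<forall>k<n. \<forall>l<m. N i j * M k l = M k l * N i j"
    and "\<forall>x<k. J ! x < n" "\<forall>x<k. I ! x < n"
  shows "tpow (matmul m M N) k J I = (\<Sum>L\<in>tidx m k. tpow M k J L * tpow N k L I)"
  using assms(2,3)
proof (induction k)
  case 0
  then show ?case by (simp add: tpow_def tidx_0)
next
  case (Suc k)
  have IH: "tpow (matmul m M N) k J I = (\<Sum>L\<in>tidx m k. tpow M k J L * tpow N k L I)"
    using Suc by simp
  have "tpow (matmul m M N) (Suc k) J I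
      = (\<Sum>L\<in>tidx m k. \<Sum>l<m. tpow M k J L * tpow N k L I * (M (J ! k) l * N l (I ! k)))"
    unfolding tpow_Suc IH by (simp add: matmul_def sum_product)
  also have "\<dots> = (\<Sum>L\<in>tidx m k. \<Sum>l<m. tpow M (Suc k) J (L @ [l]) * tpow N (Suc k) (L @ [l]) I)"
  proof (intro sum.cong refl)
    fix L l assume L: "L \<in> tidx m k" and l: "l \<in> {..<m}"
    have "tpow N k L I * M (J ! k) l = M (J ! k) l * tpow N k L I"
      unfolding tpow_def
      using comm Suc.prems l nth_tidx_less[OF L] by (intro prod_list_commute_elem) auto
    moreover have "(L @ [l]) ! k = l"
      using length_tidx[OF L] by (simp add: nth_append)
    ultimately show "tpow M k J L * tpow N k L I * (M (J ! k) l * N l (I ! k))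
        = tpow M (Suc k) J (L @ [l]) * tpow N (Suc k) (L @ [l]) I"
      using length_tidx[OF L]
      by (simp add: tpow_Suc tpow_snoc_right tpow_snoc_left mult.assoc)
         (simp add: mult.assoc[symmetric])
  qed
  also have "\<dots> = (\<Sum>L\<in>tidx m (Suc k). tpow M (Suc k) J L * tpow N (Suc k) L I)"
    by (rule sum_tidx_Suc[symmetric])
  finally show ?case .
qed

lemma ek_eq_sum_tpow:
  "k \<noteq> 0 \<Longrightarrow> ek q n k X = (\<Sum>I\<in>tidx n k. \<Sum>J\<in>tidx n k. scaleC (Aq q n k I J) (tpow X k J I))"
  by (simp add: ek_def tpow_def)

lemma sum_scaleC_sum_mult:
  "(\<Sum>J\<in>A. scaleC (c J) (\<Sum>L\<in>B. f J L * g L))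
   = (\<Sum>L\<in>B. (\<Sum>J\<in>A. scaleC (c J) (f J L)) * (g L :: 'a::cplx_algebra_1))"
proof -
  have "(\<Sum>J\<in>A. scaleC (c J) (\<Sum>L\<in>B. f J L * g L)) = (\<Sum>J\<in>A. \<Sum>L\<in>B. scaleC (c J) (f J L) * g L)"
    by (simp add: scaleC_sum_right mult_scaleC_left)
  also have "\<dots> = (\<Sum>L\<in>B. \<Sum>J\<in>A. scaleC (c J) (f J L) * g L)"
    by (rule sum.swap)
  finally show ?thesis
    by (simp add: sum_distrib_right)
qed

lemma ek_matmul_eq_trace:
  assumes "is_parametric n q" "is_parametric m p" "manin q p n m M"
    and comm: "\<forall>i<m. \<forall>j<n. \<forall>k<n. \<forall>l<m. N i j * M k l = M k l * N i j" and "k \<noteq> 0"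
  shows "ek q n k (matmul m M N) =
    (\<Sum>I\<in>tidx n k. \<Sum>J\<in>tidx n k. \<Sum>L\<in>tidx m k. \<Sum>L'\<in>tidx m k.
       scaleC (Aq q n k I J * Aq p m k L L') (tpow M k J L * tpow N k L' I))"
proof -
  define T U where "T = tidx n k" and "U = tidx m k"
  define X where "X I L = (\<Sum>J\<in>T. scaleC (Aq q n k I J) (tpow M k J L))" for I L
  define f where "f I J L L' = scaleC (Aq q n k I J * Aq p m k L L') (tpow M k J L * tpow N k L' I)"
    for I J L L'
  have "ek q n k (matmul m M N)
      = (\<Sum>I\<in>T. \<Sum>J\<in>T. scaleC (Aq q n k I J) (\<Sum>L'\<in>U. tpow M k J L' * tpow N k L' I))"
    using assms(5) comm by (simp add: ek_eq_sum_tpow tpow_matmul nth_tidx_less T_def U_def)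
  also have "\<dots> = (\<Sum>I\<in>T. \<Sum>L'\<in>U. X I L' * tpow N k L' I)"
    by (simp only: X_def sum_scaleC_sum_mult)
  also have "\<dots> = (\<Sum>I\<in>T. \<Sum>L'\<in>U. (\<Sum>L\<in>U. scaleC (Aq p m k L L') (X I L)) * tpow N k L' I)"
    using alternating_Aq_fixed[OF assms(2) alternating_tpow_row[OF assms(1-3)]]
    by (simp add: X_def T_def U_def)
  also have "\<dots> = (\<Sum>I\<in>T. \<Sum>L'\<in>U. \<Sum>L\<in>U. \<Sum>J\<in>T. f I J L L')"
    by (simp add: X_def f_def sum_distrib_right scaleC_sum_right scaleC_scaleC mult_scaleC_left
        mult.commute)
  also have "\<dots> = (\<Sum>I\<in>T. \<Sum>J\<in>T. \<Sum>L\<in>U. \<Sum>L'\<in>U. f I J L L')"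
  proof (rule sum.cong[OF refl])
    fix I
    have "(\<Sum>L'\<in>U. \<Sum>L\<in>U. \<Sum>J\<in>T. f I J L L') = (\<Sum>L\<in>U. \<Sum>L'\<in>U. \<Sum>J\<in>T. f I J L L')"
      by (rule sum.swap)
    also have "\<dots> = (\<Sum>L\<in>U. \<Sum>J\<in>T. \<Sum>L'\<in>U. f I J L L')"
      by (rule sum.cong[OF refl], rule sum.swap)
    also have "\<dots> = (\<Sum>J\<in>T. \<Sum>L\<in>U. \<Sum>L'\<in>U. f I J L L')"
      by (rule sum.swap)
    finally show "(\<Sum>L'\<in>U. \<Sum>L\<in>U. \<Sum>J\<in>T. f I J L L')
        = (\<Sum>J\<in>T. \<Sum>L\<in>U. \<Sum>L'\<in>U. f I J L L')" .
  qed
  finally show ?thesis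
    by (simp only: f_def T_def U_def)
qed

lemma sum_swap_pairs:
  "(\<Sum>a\<in>A. \<Sum>b\<in>A. \<Sum>c\<in>B. \<Sum>d\<in>B. f a b c d)
   = (\<Sum>c\<in>B. \<Sum>d\<in>B. \<Sum>a\<in>A. \<Sum>b\<in>A. f a b c d)"
proof -
  have "(\<Sum>a\<in>A. \<Sum>b\<in>A. \<Sum>c\<in>B. \<Sum>d\<in>B. f a b c d)
      = (\<Sum>a\<in>A. \<Sum>c\<in>B. \<Sum>b\<in>A. \<Sum>d\<in>B. f a b c d)"
    by (rule sum.cong[OF refl], rule sum.swap)
  also have "\<dots> = (\<Sum>a\<in>A. \<Sum>c\<in>B. \<Sum>d\<in>B. \<Sum>b\<in>A. f a b c d)"
    by (rule sum.cong[OF refl], rule sum.cong[OF refl], rule sum.swap)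
  also have "\<dots> = (\<Sum>c\<in>B. \<Sum>a\<in>A. \<Sum>d\<in>B. \<Sum>b\<in>A. f a b c d)"
    by (rule sum.swap)
  also have "\<dots> = (\<Sum>c\<in>B. \<Sum>d\<in>B. \<Sum>a\<in>A. \<Sum>b\<in>A. f a b c d)"
    by (rule sum.cong[OF refl], rule sum.swap)
  finally show ?thesis .
qed

lemma ek_matmul_commute:
  assumes "is_parametric n q" "is_parametric m p" "manin q p n m M" "manin p q m n N"
    and comm: "\<forall>i<m. \<forall>j<n. \<forall>k<n. \<forall>l<m. N i j * M k l = M k l * N i j"
  shows "ek q n k (matmul m M N) = ek p m k (matmul n N M)"
proof (cases "k = 0")
  case True
  then show ?thesis by (simp add: ek_def)
next
  case False
  define T U where "T = tidx n k" and "U = tidx m k"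
  have comm': "\<forall>i<n. \<forall>j<m. \<forall>k<m. \<forall>l<n. M i j * N k l = N k l * M i j"
    using comm by simp
  have tpow_comm: "tpow M k J L * tpow N k L' I = tpow N k L' I * tpow M k J L"
    if "I \<in> T" "J \<in> T" "L \<in> U" "L' \<in> U" for I J L L'
    unfolding tpow_def
    using comm that by (intro prod_list_commute) (auto simp: nth_tidx_less T_def U_def)
  have "ek q n k (matmul m M N) = (\<Sum>I\<in>T. \<Sum>J\<in>T. \<Sum>L\<in>U. \<Sum>L'\<in>U.
      scaleC (Aq q n k I J * Aq p m k L L') (tpow M k J L * tpow N k L' I))"
    unfolding T_def U_def by (rule ek_matmul_eq_trace[OF assms(1-3) comm False])
  also have "\<dots> = (\<Sum>L\<in>U. \<Sum>L'\<in>U. \<Sum>I\<in>T. \<Sum>J\<in>T.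
      scaleC (Aq p m k L L' * Aq q n k I J) (tpow N k L' I * tpow M k J L))"
    unfolding sum_swap_pairs[of _ T] by (intro sum.cong refl) (simp add: tpow_comm mult.commute)
  also have "\<dots> = ek p m k (matmul n N M)"
    unfolding T_def U_def by (rule ek_matmul_eq_trace[OF assms(2,1,4) comm' False, symmetric])
  finally show ?thesis .
qed

lemma char_coeff_eq_shift:
  assumes ek_eq: "\<And>k. ek q n k X = ek p m k Y" and "is_parametric n q" "is_parametric m p"
  shows "char_coeff q n X j = char_coeff p m Y (j - (int n - int m))"
proof (cases "int n < j")
  case True
  then show ?thesis by (simp add: char_coeff_def)
next
  case False
  define k where "k = nat (int n - j)"
  have vanish: "ek q n k X = 0" if "n < k \<or> m < k"
    using that ek_eq ek_eq_0_if_gt[OF assms(2)] ek_eq_0_if_gt[OF assms(3)] by metis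
  have "(0 \<le> j \<and> j \<le> int n) = (k \<le> n)" "k \<le> n \<Longrightarrow> n - nat j = k"
    using False unfolding k_def by linarith+
  then have lhs: "char_coeff q n X j = (if k \<le> n then (-1) ^ k * ek q n k X else 0)"
    by (simp add: char_coeff_def)
  have "(0 \<le> j - (int n - int m) \<and> j - (int n - int m) \<le> int m) = (k \<le> m)"
    "k \<le> m \<Longrightarrow> m - nat (j - (int n - int m)) = k"
    using False unfolding k_def by linarith+
  then have rhs: "char_coeff p m Y (j - (int n - int m))
      = (if k \<le> m then (-1) ^ k * ek p m k Y else 0)"
    by (simp add: char_coeff_def)
  show ?thesis
    using lhs rhs vanish ek_eq[of k] by auto
qed

theorem mainTheorem18:
  fixes q p :: "nat \<Rightarrow> nat \<Rightarrow> complex"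
    and M N :: "nat \<Rightarrow> nat \<Rightarrow> 'a::cplx_algebra_1"
    and n m :: nat
  assumes "is_parametric n q" and "is_parametric m p"
    and "manin q p n m M" and "manin p q m n N"
    and "\<forall>i<m. \<forall>j<n. \<forall>k<n. \<forall>l<m. N i j * M k l = M k l * N i j"
  shows "\<forall>j::int. char_coeff q n (matmul m M N) j
                   = char_coeff p m (matmul n N M) (j - (int n - int m))"
  using char_coeff_eq_shift[OF ek_matmul_commute[OF assms] assms(1,2)] by blast

end
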